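(* Let $m\ge 2$ and $n_0\ge 1$. There exist $m+1$ $(Q_{n_0},Q_m)$-saturated graphs $A_1,\dots,A_{m+1}$ such that every $(m-1)$-dimensional subcube of $Q_{n_0}$ is contained in at least one $A_i$. (For instance, $A_i$ may be taken to be any $(Q_{n_0},Q_m)$-saturated graph containing all edges whose lower-weight endpoint has weight congruent modulo $m+1$ to one of $i,i+1,\dots,i+m-2$.)
   Context: $Q_n$ is the hypercube on $\{0,1\}^n$ with edges between vertices differing in exactly one coordinate. The weight of a vertex is its number of coordinates equal to $1$. A subcube of dimension $d$ is a set $\{x: x_j=a_j \ \forall j\in J\}$ with $|J|=n-d$, with its induced edges; a graph contains it if it contains all those edges. A graph $G$ is $(Q_n,Q_m)$-saturated if $G\subseteq Q_n$, $G$ contains no subgraph isomorphic to $Q_m$, and adding any edge of $E(Q_n)\setminus E(G)$ creates such a subgraph. *)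

theory Defs
  imports Main
begin

text \<open>Vertices of Q_n are encoded as subsets of {0..<n} (the set of coordinates equal to 1);
  an edge is the two-element set of its endpoints.\<close>

definition hcube_verts :: "nat \<Rightarrow> nat set set" where
  "hcube_verts n = {x. x \<subseteq> {..<n}}"

definition hcube_edges :: "nat \<Rightarrow> nat set set set" where
  "hcube_edges n = {{x, insert i x} | x i. x \<subseteq> {..<n} \<and> i < n \<and> i \<notin> x}"

definition contains_Qm :: "nat \<Rightarrow> nat \<Rightarrow> nat set set set \<Rightarrow> bool" where
  "contains_Qm n m G \<longleftrightarrow> (\<exists>f :: nat set \<Rightarrow> nat set.
      inj_on f (hcube_verts m) \<and> f ` hcube_verts m \<subseteq> hcube_verts n \<and>
      (\<forall>e \<in> hcube_edges m. f ` e \<in> G))"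

definition saturated :: "nat \<Rightarrow> nat \<Rightarrow> nat set set set \<Rightarrow> bool" where
  "saturated n m G \<longleftrightarrow> G \<subseteq> hcube_edges n \<and> \<not> contains_Qm n m G \<and>
     (\<forall>e \<in> hcube_edges n - G. contains_Qm n m (insert e G))"

text \<open>Edge set of the subcube of Q_n with free coordinates D and fixed part a
  (coordinates outside D equal 1 exactly on a).\<close>
definition subcube_edges :: "nat \<Rightarrow> nat set \<Rightarrow> nat set \<Rightarrow> nat set set set" where
  "subcube_edges n D a = {{x, insert i x} | x i. x \<subseteq> {..<n} \<and> x - D = a \<and> i \<in> D \<and> i \<notin> x}"

definition is_subcube :: "nat \<Rightarrow> nat \<Rightarrow> nat set \<Rightarrow> nat set \<Rightarrow> bool" where
  "is_subcube n d D a \<longleftrightarrow> D \<subseteq> {..<n} \<and> card D = d \<and> a \<subseteq> {..<n} - D"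

end

theory Submission
  imports Defs
begin

(* Fix a shift r and let L_r be the subgraph of Q_n consisting of the edges
   whose lower endpoint x satisfies (|x| + r) mod (m+1) < m - 1, i.e. whose lower weight
   lies in a window of m - 1 out of every m + 1 consecutive levels.

   (1) L_r contains no Q_m.  Given an injective edge-preserving map f : Q_m -> Q_n, let x0
       minimise the weight of f.  A 4-cycle argument in Q_n shows that f is graded:
       |f z| = |f x0| + dist(z, x0).  Walking from x0 along the m coordinates of Q_m thus
       uses edges whose lower weights are m consecutive integers, and m consecutive
       residues mod m+1 cannot all avoid the two residues m-1 and m.
   (2) Every (m-1)-dimensional subcube spans only m - 1 consecutive levels; choosing r
       according to the weight of its bottom vertex puts all of its edges into L_r.
   (3) Every Q_m-free subgraph of Q_n extends to a saturated one (add edges while possible).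
   Hence the saturated extensions of L_1, ..., L_{m+1} are the required graphs. *)

lemma finite_hcube_edges: "finite (hcube_edges n)"
proof (rule finite_subset)
  show "hcube_edges n \<subseteq> Pow (Pow {..<n})"
    unfolding hcube_edges_def by blast
qed simp

lemma hcube_edge_cases:
  assumes "{p, q} \<in> hcube_edges n"
  shows "p \<subseteq> {..<n} \<and> q \<subseteq> {..<n} \<and>
    ((\<exists>i. i \<notin> p \<and> q = insert i p) \<or> (\<exists>i. i \<notin> q \<and> p = insert i q))"
proof -
  obtain x i where xi: "{p, q} = {x, insert i x}" "x \<subseteq> {..<n}" "i < n" "i \<notin> x"
    using assms unfolding hcube_edges_def by blast
  then have "(p = x \<and> q = insert i x) \<or> (p = insert i x \<and> q = x)"
    by (simp add: doubleton_eq_iff)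
  then show ?thesis using xi by blast
qed

lemma hcube_edge_card:
  assumes "{p, q} \<in> hcube_edges n"
  shows "card q = card p + 1 \<or> card p = card q + 1"
proof -
  have "finite p" "finite q"
    using hcube_edge_cases[OF assms] finite_subset[OF _ finite_lessThan] by blast+
  then show ?thesis using hcube_edge_cases[OF assms] by auto
qed

lemma hcube_edge_up:
  assumes "{p, q} \<in> hcube_edges n" and "card q = card p + 1"
  shows "\<exists>i. i \<notin> p \<and> q = insert i p"
proof -
  have "finite q" using hcube_edge_cases[OF assms(1)] finite_subset[OF _ finite_lessThan] by blast
  then show ?thesis using hcube_edge_cases[OF assms(1)] assms(2) by auto
qed

lemma hcube_edge_toggle:
  assumes "S \<subseteq> {..<m}" and "a < m"
  shows "{S, sym_diff S {a}} \<in> hcube_edges m"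
proof (cases "a \<in> S")
  case True
  then have "{S, sym_diff S {a}} = {S - {a}, insert a (S - {a})}" by auto
  then show ?thesis unfolding hcube_edges_def using assms by blast
next
  case False
  then have "{S, sym_diff S {a}} = {S, insert a S}" by auto
  then show ?thesis unfolding hcube_edges_def using assms False by blast
qed

text \<open>This is what forces an embedded
  cube to be graded.\<close>

lemma hcube_square:
  assumes e1: "{t, y1} \<in> hcube_edges n" and e2: "{t, y2} \<in> hcube_edges n"
    and e3: "{y1, z} \<in> hcube_edges n" and e4: "{y2, z} \<in> hcube_edges n"
    and up1: "card y1 = card t + 1" and up2: "card y2 = card t + 1"
    and "y1 \<noteq> y2" and "z \<noteq> t"
  shows "card z = card t + 2"
proof (rule ccontr)
  assume "card z \<noteq> card t + 2"
  then have down1: "card y1 = card z + 1" and down2: "card y2 = card z + 1"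
    using hcube_edge_card[OF e3] hcube_edge_card[OF e4] up1 up2 by linarith+
  obtain a where a: "a \<notin> t" "y1 = insert a t" using hcube_edge_up[OF e1 up1] by blast
  obtain b where b: "b \<notin> t" "y2 = insert b t" using hcube_edge_up[OF e2 up2] by blast
  have "{z, y1} \<in> hcube_edges n" "{z, y2} \<in> hcube_edges n"
    using e3 e4 by (simp_all add: insert_commute)
  then obtain i j where i: "i \<notin> z" "y1 = insert i z" and j: "y2 = insert j z"
    using hcube_edge_up down1 down2 by meson
  have "i \<noteq> a"
  proof
    assume "i = a"
    then have "z = y1 - {a}" using i by simp
    also have "\<dots> = t" using a by simp
    finally show False using \<open>z \<noteq> t\<close> by simp
  qed
  moreover have "a \<in> y1" using a(2) by simp
  ultimately have "a \<in> z" using i(2) by simp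
  then have "a \<in> y2" using j by simp
  then have "a = b" using a(1) b(2) by simp
  then show False using a b \<open>y1 \<noteq> y2\<close> by simp
qed

definition cube_embedding :: "nat \<Rightarrow> nat \<Rightarrow> (nat set \<Rightarrow> nat set) \<Rightarrow> bool" where
  "cube_embedding n m f \<longleftrightarrow>
     inj_on f (hcube_verts m) \<and> (\<forall>e \<in> hcube_edges m. f ` e \<in> hcube_edges n)"

lemma cube_embedding_edge:
  assumes "cube_embedding n m f" and "S \<subseteq> {..<m}" and "a < m"
  shows "{f S, f (sym_diff S {a})} \<in> hcube_edges n"
  using assms hcube_edge_toggle[OF assms(2,3)] unfolding cube_embedding_def by force

lemma cube_embedding_inj:
  assumes "cube_embedding n m f" and "S \<subseteq> {..<m}" and "T \<subseteq> {..<m}" and "S \<noteq> T"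
  shows "f S \<noteq> f T"
  using assms unfolding cube_embedding_def inj_on_def hcube_verts_def by blast

lemma cube_embedding_square:
  assumes emb: "cube_embedding n m f" and z: "z \<subseteq> {..<m}"
    and ab: "a < m" "b < m" "a \<noteq> b"
    and up: "card (f (sym_diff z {a})) = card (f (sym_diff z {a, b})) + 1"
            "card (f (sym_diff z {b})) = card (f (sym_diff z {a, b})) + 1"
  shows "card (f z) = card (f (sym_diff z {a, b})) + 2"
proof -
  define y1 y2 t where "y1 = sym_diff z {a}" and "y2 = sym_diff z {b}"
    and "t = sym_diff z {a, b}"
  have verts: "y1 \<subseteq> {..<m}" "y2 \<subseteq> {..<m}" "t \<subseteq> {..<m}"
    using z ab unfolding y1_def y2_def t_def by auto
  have t_from: "t = sym_diff y1 {b}" "t = sym_diff y2 {a}"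
    unfolding y1_def y2_def t_def using ab by auto
  have "y1 \<noteq> y2" "z \<noteq> t"
    unfolding y1_def y2_def t_def using ab(3) by (auto simp: set_eq_iff)
  then have distinct: "f y1 \<noteq> f y2" "f z \<noteq> f t"
    using cube_embedding_inj[OF emb] verts z by auto
  have "{f t, f y1} \<in> hcube_edges n"
    using cube_embedding_edge[OF emb verts(1) ab(2)] by (simp add: t_from(1)[symmetric] insert_commute)
  moreover have "{f t, f y2} \<in> hcube_edges n"
    using cube_embedding_edge[OF emb verts(2) ab(1)] by (simp add: t_from(2)[symmetric] insert_commute)
  moreover have "{f y1, f z} \<in> hcube_edges n" "{f y2, f z} \<in> hcube_edges n"
    using cube_embedding_edge[OF emb z ab(1)] cube_embedding_edge[OF emb z ab(2)]
    by (simp_all add: y1_def y2_def insert_commute)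
  ultimately show ?thesis
    using hcube_square[OF _ _ _ _ _ _ distinct] up unfolding y1_def y2_def t_def by blast
qed

lemma card_sym_diff_toggle:
  assumes "finite (sym_diff z x)" and "A \<subseteq> sym_diff z x"
  shows "card (sym_diff (sym_diff z A) x) = card (sym_diff z x) - card A"
proof -
  have "sym_diff (sym_diff z A) x = sym_diff z x - A" using assms(2) by auto
  then show ?thesis using assms by (simp add: card_Diff_subset finite_subset)
qed

lemma cube_embedding_graded:
  assumes emb: "cube_embedding n m f" and x0: "x0 \<subseteq> {..<m}"
    and min: "\<And>y. y \<subseteq> {..<m} \<Longrightarrow> card (f x0) \<le> card (f y)"
    and z: "z \<subseteq> {..<m}"
  shows "card (f z) = card (f x0) + card (sym_diff z x0)"
proof -
  have "card (f z) = card (f x0) + k" if "z \<subseteq> {..<m}" "card (sym_diff z x0) = k" for k z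
    using that
  proof (induction k arbitrary: z rule: less_induct)
    case (less k z)
    have dist: "sym_diff z x0 \<subseteq> {..<m}" using less.prems(1) x0 by blast
    then have fin: "finite (sym_diff z x0)" by (rule finite_subset) simp
    consider "k = 0" | "k = 1" | "k \<ge> 2" by linarith
    then show ?case
    proof cases
      case 1
      then have "z = x0" using less.prems(2) fin by auto
      then show ?thesis using 1 by simp
    next
      case 2
      then obtain a where "sym_diff z x0 = {a}"
        using less.prems(2) card_1_singletonE by blast
      then have "a < m" "sym_diff z {a} = x0" using dist by auto
      then have "{f z, f x0} \<in> hcube_edges n"
        using cube_embedding_edge[OF emb less.prems(1)] by metis
      then show ?thesis using hcube_edge_card min[OF less.prems(1)] 2 by fastforce
    next
      case 3
      then obtain a where a: "a \<in> sym_diff z x0"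
        using less.prems(2) by (metis card.empty ex_in_conv not_numeral_le_zero)
      moreover have "card (sym_diff z x0 - {a}) \<ge> 1"
        using 3 a fin less.prems(2) by simp
      ultimately obtain b where b: "b \<in> sym_diff z x0" and "a \<noteq> b"
        by (metis Diff_iff card.empty ex_in_conv insertI1 not_one_le_zero)
      have ab: "a < m" "b < m" using a b dist by auto
      have subs: "sym_diff z {a} \<subseteq> {..<m}" "sym_diff z {b} \<subseteq> {..<m}"
        "sym_diff z {a, b} \<subseteq> {..<m}" using less.prems(1) ab by auto
      have dists: "card (sym_diff (sym_diff z {a}) x0) = k - 1"
           "card (sym_diff (sym_diff z {b}) x0) = k - 1"
           "card (sym_diff (sym_diff z {a, b}) x0) = k - 2"
        using card_sym_diff_toggle[OF fin, of "{a}"] card_sym_diff_toggle[OF fin, of "{b}"]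
          card_sym_diff_toggle[OF fin, of "{a, b}"] a b \<open>a \<noteq> b\<close> less.prems(2) by simp_all
      have "card (f (sym_diff z {a})) = card (f x0) + (k - 1)"
           "card (f (sym_diff z {b})) = card (f x0) + (k - 1)"
           "card (f (sym_diff z {a, b})) = card (f x0) + (k - 2)"
        using less.IH[OF _ subs(1) dists(1)] less.IH[OF _ subs(2) dists(2)]
          less.IH[OF _ subs(3) dists(3)] 3 by simp_all
      then show ?thesis
        using cube_embedding_square[OF emb less.prems(1) ab \<open>a \<noteq> b\<close>] 3 by simp
    qed
  qed
  then show ?thesis using z by blast
qed

definition level_graph :: "nat \<Rightarrow> nat \<Rightarrow> nat \<Rightarrow> nat set set set" where
  "level_graph n m r =
     {{x, insert j x} | x j. x \<subseteq> {..<n} \<and> j < n \<and> j \<notin> x \<and> (card x + r) mod (m+1) < m - 1}"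

lemma level_graph_subset: "level_graph n m r \<subseteq> hcube_edges n"
  unfolding level_graph_def hcube_edges_def by blast

lemma level_graph_lower:
  assumes "{p, q} \<in> level_graph n m r" and "card q = card p + 1"
  shows "(card p + r) mod (m+1) < m - 1"
proof -
  obtain x j where xj: "{p, q} = {x, insert j x}" "x \<subseteq> {..<n}" "j \<notin> x"
      "(card x + r) mod (m+1) < m - 1"
    using assms(1) unfolding level_graph_def by blast
  have "finite x" using xj(2) finite_subset by blast
  then have "p \<noteq> insert j x \<or> q \<noteq> x" using xj(3) assms(2) by auto
  then have "p = x" using xj(1) by (auto simp: doubleton_eq_iff)
  then show ?thesis using xj(4) by simp
qed

lemma consecutive_residues:
  fixes w m :: nat
  assumes "m \<ge> 1"
  shows "\<exists>k<m. (w + k) mod (m+1) \<ge> m - 1"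
proof -
  define c where "c = w mod (m+1)"
  have shift: "(w + k) mod (m+1) = (c + k) mod (m+1)" for k
    unfolding c_def by (simp add: mod_add_left_eq)
  show ?thesis
  proof (cases "c = 0")
    case True
    then have "(w + (m - 1)) mod (m+1) = m - 1" using shift[of "m - 1"] by simp
    then show ?thesis using assms by (intro exI[of _ "m - 1"]) simp
  next
    case False
    have "c < m + 1" unfolding c_def by simp
    then have "(w + (m - c)) mod (m+1) = m" using shift[of "m - c"] by simp
    then show ?thesis using False assms by (intro exI[of _ "m - c"]) simp
  qed
qed

text \<open>In an embedded Q_m the path from the lowest vertex x0
  flipping coordinates 0, ..., m - 1 in turn climbs m consecutive levels, and each of its
  edges would need its lower level inside the window of L_r.\<close>

lemma level_graph_Qm_free:
  assumes "m \<ge> 1"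
  shows "\<not> contains_Qm n m (level_graph n m r)"
proof
  assume "contains_Qm n m (level_graph n m r)"
  then obtain f where "inj_on f (hcube_verts m)"
    and edges: "\<forall>e \<in> hcube_edges m. f ` e \<in> level_graph n m r"
    unfolding contains_Qm_def by blast
  then have emb: "cube_embedding n m f"
    unfolding cube_embedding_def using level_graph_subset by blast
  obtain x0 where x0: "x0 \<subseteq> {..<m}" and min: "\<And>y. y \<subseteq> {..<m} \<Longrightarrow> card (f x0) \<le> card (f y)"
    using ex_has_least_nat[of "\<lambda>x. x \<subseteq> {..<m}" "{}" "\<lambda>x. card (f x)"] by auto
  have low: "(card (f x0) + k + r) mod (m+1) < m - 1" if "k < m" for k
  proof -
    define p where "p i = sym_diff x0 {..<i}" for i
    have verts: "p k \<subseteq> {..<m}" "p (Suc k) \<subseteq> {..<m}" using x0 that unfolding p_def by auto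
    have step: "p (Suc k) = sym_diff (p k) {k}" unfolding p_def by (auto simp: lessThan_Suc)
    have "sym_diff (p i) x0 = {..<i}" for i unfolding p_def by auto
    then have weights: "card (f (p k)) = card (f x0) + k" "card (f (p (Suc k))) = card (f x0) + Suc k"
      using cube_embedding_graded[OF emb x0 min] verts by simp_all
    have "{f (p k), f (p (Suc k))} \<in> level_graph n m r"
      using edges hcube_edge_toggle[OF verts(1) that] step by force
    from level_graph_lower[OF this] show ?thesis using weights by (simp add: ac_simps)
  qed
  then show False using consecutive_residues[OF assms, of "card (f x0) + r"]
    by (metis add.assoc add.commute leD)
qed

text \<open>Step (2): an (m-1)-dimensional subcube with bottom vertex a spans the levels |a|, ..., |a| + m - 1,
  so its edges all lie in L_r for the shift r making |a| + r divisible by m + 1.\<close>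

lemma subcube_in_level_graph:
  assumes m: "m \<ge> 2" and sc: "is_subcube n (m - 1) D a"
  defines "r \<equiv> (m+1) - card a mod (m+1)"
  shows "r \<in> {1..m+1}" and "subcube_edges n D a \<subseteq> level_graph n m r"
proof -
  show "r \<in> {1..m+1}" unfolding r_def by (simp add: Suc_le_eq)
  have D: "D \<subseteq> {..<n}" "card D = m - 1" and an: "a \<subseteq> {..<n} - D"
    using sc unfolding is_subcube_def by auto
  have fin: "finite D" "finite a" using D an finite_subset by blast+
  have divisible: "(card a + r) mod (m+1) = 0"
  proof -
    have "card a mod (m+1) < m + 1" by simp
    then have sum: "card a + r = card a div (m+1) * (m+1) + (m+1)"
      unfolding r_def using div_mult_mod_eq[of "card a" "m+1"] by linarith
    show ?thesis unfolding sum by (simp only: mod_add_self2 mod_mult_self2_is_0)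
  qed
  show "subcube_edges n D a \<subseteq> level_graph n m r"
  proof
    fix e assume "e \<in> subcube_edges n D a"
    then obtain x j where xj: "e = {x, insert j x}" "x \<subseteq> {..<n}" "x - D = a" "j \<in> D" "j \<notin> x"
      unfolding subcube_edges_def by blast
    have "card (a \<union> (x \<inter> D)) = card a + card (x \<inter> D)"
      using fin an by (intro card_Un_disjoint) auto
    moreover have "a \<union> (x \<inter> D) = x" using xj(3) by blast
    ultimately have cx: "card x = card a + card (x \<inter> D)" by simp
    have "card (x \<inter> D) \<le> card (D - {j})"
      using xj(5) fin by (intro card_mono) auto
    then have small: "card (x \<inter> D) < m - 1" using D xj(4) fin m by simp
    have "(card x + r) mod (m+1) = (card (x \<inter> D) + (card a + r)) mod (m+1)"
      using cx by (simp add: ac_simps)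
    also have "\<dots> = (card (x \<inter> D) + (card a + r) mod (m+1)) mod (m+1)"
      by (rule mod_add_right_eq[symmetric])
    also have "\<dots> = card (x \<inter> D)"
      using divisible small by simp
    finally have "(card x + r) mod (m+1) < m - 1" using small by simp
    moreover have "j < n" using xj(4) D(1) by blast
    ultimately show "e \<in> level_graph n m r"
      unfolding level_graph_def using xj(1,2,5) by blast
  qed
qed

text \<open>Step (3): every Q_m-free subgraph of Q_n extends to a (Q_n, Q_m)-saturated graph: take a
  Q_m-free supergraph with the maximum number of edges.\<close>

lemma extend_to_saturated:
  assumes "G \<subseteq> hcube_edges n" and "\<not> contains_Qm n m G"
  shows "\<exists>H. G \<subseteq> H \<and> saturated n m H"
proof -
  let ?free = "\<lambda>H. G \<subseteq> H \<and> H \<subseteq> hcube_edges n \<and> \<not> contains_Qm n m H"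
  have bounded: "\<forall>H. ?free H \<longrightarrow> card H < card (hcube_edges n) + 1"
    using card_mono[OF finite_hcube_edges] by (simp add: less_Suc_eq_le)
  have "?free G" using assms by blast
  then obtain H where H: "?free H" and max: "\<And>H'. ?free H' \<Longrightarrow> card H' \<le> card H"
    using ex_has_greatest_nat[of ?free G card, OF _ bounded] by blast
  have "finite H" using H finite_hcube_edges finite_subset by blast
  have "contains_Qm n m (insert e H)" if e: "e \<in> hcube_edges n - H" for e
  proof (rule ccontr)
    assume "\<not> contains_Qm n m (insert e H)"
    then have "card (insert e H) \<le> card H" using H e by (intro max) blast
    then show False using \<open>finite H\<close> e by simp
  qed
  then have "saturated n m H" using H unfolding saturated_def by blast
  then show ?thesis using H by blast
qed

theorem mainTheorem5:
  fixes m n0 :: nat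
  assumes "m \<ge> 2" and "n0 \<ge> 1"
  shows "\<exists>A :: nat \<Rightarrow> nat set set set.
           (\<forall>i \<in> {1..m+1}. saturated n0 m (A i)) \<and>
           (\<forall>D a. is_subcube n0 (m - 1) D a \<longrightarrow>
              (\<exists>i \<in> {1..m+1}. subcube_edges n0 D a \<subseteq> A i))"
proof -
  have "\<exists>H. level_graph n0 m r \<subseteq> H \<and> saturated n0 m H" for r
    using extend_to_saturated[OF level_graph_subset level_graph_Qm_free] assms(1) by simp
  then obtain A where A: "\<And>r. level_graph n0 m r \<subseteq> A r \<and> saturated n0 m (A r)"
    by metis
  have "\<exists>i \<in> {1..m+1}. subcube_edges n0 D a \<subseteq> A i" if "is_subcube n0 (m - 1) D a" for D a
    using subcube_in_level_graph[OF assms(1) that] A by blast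
  then show ?thesis using A by blast
qed

end
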